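(* Let $G$ be a connected simple graph with $m$ edges and let $k\geq 2$ be an integer. Then $$\chi_{dom}(P_{k+1})\leq \chi_{dom}(G^{\frac{1}{k}})\leq (m-1)\chi_{dom}(P_k)+\chi_{dom}(P_{k+1}).$$
   Context: All graphs are finite and simple. A dominated coloring of a graph $H$ is a proper vertex coloring of $H$ such that for every color class $C$ there is a vertex $x\in V(H)$ adjacent to every vertex of $C$. The dominated chromatic number $\chi_{dom}(H)$ is the minimum number of colors in a dominated coloring of $H$. $P_n$ denotes the path on $n$ vertices. The $k$-subdivision $G^{\frac{1}{k}}$ of $G$ is the graph obtained by replacing each edge $v_iv_j$ of $G$ by a path of length $k$ (i.e. with $k-1$ new internal vertices) between $v_i$ and $v_j$, the internal vertices of distinct such paths being distinct; if $G$ has $n$ vertices and $m$ edges then $G^{\frac{1}{k}}$ has $n+(k-1)m$ vertices and $km$ edges. *)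

theory Defs
  imports Main
begin

definition simple_graph :: "'a set \<Rightarrow> 'a set set \<Rightarrow> bool" where
  "simple_graph V E \<longleftrightarrow> finite V \<and>
     (\<forall>e\<in>E. \<exists>u v. u \<in> V \<and> v \<in> V \<and> u \<noteq> v \<and> e = {u, v})"

definition connected_graph :: "'a set \<Rightarrow> 'a set set \<Rightarrow> bool" where
  "connected_graph V E \<longleftrightarrow> V \<noteq> {} \<and>
     (\<forall>u\<in>V. \<forall>v\<in>V. (\<lambda>x y. {x, y} \<in> E)\<^sup>*\<^sup>* u v)"

definition dominated_coloring :: "'a set \<Rightarrow> 'a set set \<Rightarrow> ('a \<Rightarrow> nat) \<Rightarrow> bool" where
  "dominated_coloring V E c \<longleftrightarrow>
     (\<forall>x\<in>V. \<forall>y\<in>V. {x, y} \<in> E \<longrightarrow> c x \<noteq> c y) \<and>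
     (\<forall>j \<in> c ` V. \<exists>x\<in>V. \<forall>y\<in>{v\<in>V. c v = j}. {x, y} \<in> E)"

definition chi_dom :: "'a set \<Rightarrow> 'a set set \<Rightarrow> nat" where
  "chi_dom V E = (LEAST n. \<exists>c. dominated_coloring V E c \<and> card (c ` V) = n)"

definition path_V :: "nat \<Rightarrow> nat set" where
  "path_V n = {0..<n}"

definition path_E :: "nat \<Rightarrow> nat set set" where
  "path_E n = {{i, Suc i} | i. Suc i < n}"

text \<open>k-subdivision. Each edge e is oriented by choosing one endpoint
 (end0 e); the other endpoint is end1 e. The path replacing e is
 end0 e = pos 0, Inr (e,1), ..., Inr (e,k-1), pos k = end1 e.\<close>

definition end0 :: "'a set \<Rightarrow> 'a" where
  "end0 e = (SOME u. u \<in> e)"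

definition end1 :: "'a set \<Rightarrow> 'a" where
  "end1 e = (SOME u. u \<in> e - {end0 e})"

definition sub_pos :: "nat \<Rightarrow> 'a set \<Rightarrow> nat \<Rightarrow> 'a + ('a set \<times> nat)" where
  "sub_pos k e i = (if i = 0 then Inl (end0 e) else if i = k then Inl (end1 e) else Inr (e, i))"

definition subdiv_V :: "nat \<Rightarrow> 'a set \<Rightarrow> 'a set set \<Rightarrow> ('a + ('a set \<times> nat)) set" where
  "subdiv_V k V E = Inl ` V \<union> {Inr (e, i) | e i. e \<in> E \<and> 1 \<le> i \<and> i < k}"

definition subdiv_E :: "nat \<Rightarrow> 'a set set \<Rightarrow> ('a + ('a set \<times> nat)) set set" where
  "subdiv_E k E = {{sub_pos k e i, sub_pos k e (Suc i)} | e i. e \<in> E \<and> i < k}"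

end

theory Submission
  imports Defs "HOL-Library.Countable_Set"
begin

text \<open>A dominated colouring of the subdivision restricts to one of the path P_{k+1} that
  replaces any edge e: a vertex dominating two vertices of that path is adjacent to both, and
  therefore lies on the path itself.

  For the upper bound, grow a spanning tree from an edge e0 and give every branch vertex outside
  e0 to the tree edge leading to its parent. Then e0 owns its whole path P_{k+1}, and every other
  edge owns its k - 1 inner vertices and at most one endpoint, that is, a subpath on k vertices.
  Colour each owned path by an optimal dominated colouring of P_{k+1} or P_k, with a separate
  palette for every edge. Adjacent vertices lie on a common owned path, so the colouring is proper,
  and each colour class lies in one owned path, where it is dominated.\<close>

lemma chi_dom_le: "dominated_coloring V E c \<Longrightarrow> chi_dom V E \<le> card (c ` V)"
  unfolding chi_dom_def by (rule Least_le) blast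

lemma chi_dom_attained:
  "dominated_coloring V E c \<Longrightarrow> \<exists>c'. dominated_coloring V E c' \<and> card (c' ` V) = chi_dom V E"
  unfolding chi_dom_def by (rule LeastI_ex) blast

lemma doubleton_in_path_E_iff:
  "{a, b} \<in> path_E n \<longleftrightarrow> (b = Suc a \<and> Suc a < n) \<or> (a = Suc b \<and> Suc b < n)"
  unfolding path_E_def by (auto simp: doubleton_eq_iff)

lemma path_neighbour_exists:
  assumes "2 \<le> n" "i < n"
  shows "\<exists>j<n. {j, i} \<in> path_E n"
proof (cases "Suc i < n")
  case True
  then show ?thesis by (intro exI[of _ "Suc i"]) (simp add: doubleton_in_path_E_iff)
next
  case False
  then show ?thesis using assms by (intro exI[of _ "i - 1"]) (auto simp: doubleton_in_path_E_iff)
qed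

lemma dominated_coloring_path_id:
  assumes "2 \<le> n"
  shows "dominated_coloring (path_V n) (path_E n) id"
  unfolding dominated_coloring_def
proof (intro conjI ballI impI)
  fix x y assume "{x, y} \<in> path_E n"
  then show "id x \<noteq> id y" by (auto simp: doubleton_in_path_E_iff)
next
  fix j assume "j \<in> id ` path_V n"
  then obtain i where "i < n" "{i, j} \<in> path_E n"
    using path_neighbour_exists[OF assms] by (auto simp: path_V_def)
  then show "\<exists>x\<in>path_V n. \<forall>y\<in>{v \<in> path_V n. id v = j}. {x, y} \<in> path_E n"
    by (auto simp: path_V_def)
qed

lemma edge_endpoints:
  assumes "simple_graph V E" "e \<in> E"
  shows "e = {end0 e, end1 e}" "end0 e \<noteq> end1 e" "end0 e \<in> V" "end1 e \<in> V"
proof -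
  obtain u v where uv: "u \<in> V" "v \<in> V" "u \<noteq> v" "e = {u, v}"
    using assms unfolding simple_graph_def by blast
  have end0: "end0 e \<in> e" unfolding end0_def using uv by (metis insertI1 someI_ex)
  have end1: "end1 e \<in> e - {end0 e}" unfolding end1_def by (rule someI_ex) (use uv end0 in auto)
  show "e = {end0 e, end1 e}" "end0 e \<noteq> end1 e" "end0 e \<in> V" "end1 e \<in> V"
    using end0 end1 uv by auto
qed

lemma edge_endpoints_mem: "simple_graph V E \<Longrightarrow> e \<in> E \<Longrightarrow> end0 e \<in> e \<and> end1 e \<in> e"
  using edge_endpoints(1) by (metis insertI1 insertI2)

lemma edge_subset_vertices: "simple_graph V E \<Longrightarrow> e \<in> E \<Longrightarrow> e \<subseteq> V"
  using edge_endpoints by (metis empty_subsetI insert_subset)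

lemma edge_subset_edge_eq:
  assumes "simple_graph V E" "e \<in> E" "e' \<in> E" "e' \<subseteq> e"
  shows "e' = e"
proof -
  have "card e' = 2" "card e = 2"
    using edge_endpoints(1,2)[OF assms(1,2)] edge_endpoints(1,2)[OF assms(1,3)] by (metis card_2_iff)+
  then show ?thesis using assms(4) by (metis card_subset_eq card.infinite zero_neq_numeral)
qed

lemma simple_graph_finite_edges:
  assumes "simple_graph V E"
  shows "finite E"
proof (rule finite_subset)
  show "E \<subseteq> Pow V" using edge_subset_vertices[OF assms] by blast
  show "finite (Pow V)" using assms unfolding simple_graph_def by simp
qed

section \<open>Spanning trees grown from an edge\<close>

text \<open>Read p v as the edge from v to its parent in a spanning tree of the vertices S
  that contains the root edge e0. Injectivity on S - e0 means that every edge other than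
  e0 is the parent edge of at most one of its endpoints.\<close>

definition parent_edges :: "'a set \<Rightarrow> 'a set set \<Rightarrow> 'a set \<Rightarrow> ('a \<Rightarrow> 'a set) \<Rightarrow> bool" where
  "parent_edges S E e0 p \<longleftrightarrow>
     (\<forall>v\<in>S. v \<in> p v \<and> p v \<in> E \<and> p v \<subseteq> S \<and> (v \<in> e0 \<longrightarrow> p v = e0)) \<and> inj_on p (S - e0)"

lemma rtranclp_adjacent_leaves_set:
  assumes "(\<lambda>x y. {x, y} \<in> E)\<^sup>*\<^sup>* u v" "u \<in> S" "v \<notin> S"
  shows "\<exists>x y. x \<in> S \<and> y \<notin> S \<and> {x, y} \<in> E"
  using assms
proof (induction rule: rtranclp_induct)
  case (step y z)
  then show ?case by (cases "y \<in> S") auto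
qed simp

lemma parent_edges_extend:
  assumes sg: "simple_graph V E" and con: "connected_graph V E"
    and S: "S \<subseteq> V" "S \<noteq> V" "u \<in> S" and p: "parent_edges S E e0 p" and e0: "e0 \<subseteq> S"
  shows "\<exists>y p'. y \<in> V - S \<and> parent_edges (insert y S) E e0 p'"
proof -
  obtain v where v: "v \<in> V" "v \<notin> S" using S by blast
  have "(\<lambda>x y. {x, y} \<in> E)\<^sup>*\<^sup>* u v" using con S v unfolding connected_graph_def by blast
  from rtranclp_adjacent_leaves_set[OF this S(3) v(2)]
  obtain x y where xy: "x \<in> S" "y \<notin> S" "{x, y} \<in> E" by blast
  have y: "y \<in> V - S" "y \<notin> e0" using edge_subset_vertices[OF sg xy(3)] xy(2) e0 by auto
  have pS: "\<And>w. w \<in> S \<Longrightarrow> w \<in> p w \<and> p w \<in> E \<and> p w \<subseteq> S \<and> (w \<in> e0 \<longrightarrow> p w = e0)"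
    and inj: "inj_on p (S - e0)" using p unfolding parent_edges_def by auto
  have new: "{x, y} \<notin> p ` (S - e0)" using pS xy(2) by blast
  let ?p' = "p(y := {x, y})"
  have "w \<in> ?p' w \<and> ?p' w \<in> E \<and> ?p' w \<subseteq> insert y S \<and> (w \<in> e0 \<longrightarrow> ?p' w = e0)"
    if w: "w \<in> insert y S" for w
  proof (cases "w = y")
    case True
    then show ?thesis using xy y by simp
  next
    case False
    then show ?thesis using w pS[of w] by auto
  qed
  moreover have "inj_on ?p' (insert y S - e0)"
  proof -
    have "inj_on ?p' (S - e0)" using inj_on_fun_updI[OF inj new] .
    moreover have "?p' y \<notin> ?p' ` (S - e0 - {y})" using new by auto
    moreover have "insert y S - e0 = insert y (S - e0)" using y by blast
    ultimately show ?thesis by simp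
  qed
  ultimately have "parent_edges (insert y S) E e0 ?p'" unfolding parent_edges_def by blast
  then show ?thesis using y by blast
qed

lemma parent_edges_exist:
  assumes sg: "simple_graph V E" and con: "connected_graph V E" and e0: "e0 \<in> E"
  shows "\<exists>p. parent_edges V E e0 p"
proof -
  have "\<exists>p. parent_edges V E e0 p" if "S \<subseteq> V" "e0 \<subseteq> S" "parent_edges S E e0 p" for S p
    using that
  proof (induction "card (V - S)" arbitrary: S p rule: less_induct)
    case less
    show ?case
    proof (cases "S = V")
      case True
      then show ?thesis using less by blast
    next
      case False
      obtain u where "u \<in> e0" using edge_endpoints(1)[OF sg e0] by blast
      then obtain y p' where y: "y \<in> V - S" "parent_edges (insert y S) E e0 p'"
        using parent_edges_extend[OF sg con less(2) False _ less(4,3)] less(3) by blast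
      have "card (V - insert y S) < card (V - S)"
        using y(1) sg unfolding simple_graph_def by (metis Diff_insert card_Diff1_less finite_Diff)
      then show ?thesis using less(1) y less(2,3) by blast
    qed
  qed
  moreover have "parent_edges e0 E e0 (\<lambda>_. e0)" unfolding parent_edges_def using e0 by auto
  ultimately show ?thesis using edge_subset_vertices[OF sg e0] by blast
qed

section \<open>The k-subdivision\<close>

locale graph_subdivision =
  fixes V :: "'a set" and E :: "'a set set" and k :: nat
  assumes simple: "simple_graph V E" and k_ge_2: "2 \<le> k"
begin

abbreviation Vk :: "('a + 'a set \<times> nat) set" where "Vk \<equiv> subdiv_V k V E"
abbreviation Ek :: "('a + 'a set \<times> nat) set set" where "Ek \<equiv> subdiv_E k E"

lemma sub_pos_0 [simp]: "sub_pos k e 0 = Inl (end0 e)"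
  by (simp add: sub_pos_def)

lemma sub_pos_k [simp]: "sub_pos k e k = Inl (end1 e)"
  using k_ge_2 by (simp add: sub_pos_def)

lemma sub_pos_inner: "0 < i \<Longrightarrow> i < k \<Longrightarrow> sub_pos k e i = Inr (e, i)"
  by (simp add: sub_pos_def)

lemma sub_pos_eq_Inr: "sub_pos k e i = Inr (e', t) \<Longrightarrow> e' = e \<and> t = i \<and> 0 < i \<and> i \<noteq> k"
  by (auto simp: sub_pos_def split: if_splits)

lemma sub_pos_eq_Inl: "sub_pos k e i = Inl u \<Longrightarrow> (i = 0 \<and> u = end0 e) \<or> (i = k \<and> u = end1 e)"
  by (auto simp: sub_pos_def split: if_splits)

lemma sub_pos_in_subdiv_V: "e \<in> E \<Longrightarrow> i \<le> k \<Longrightarrow> sub_pos k e i \<in> Vk"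
  using edge_endpoints[OF simple] by (auto simp: sub_pos_def subdiv_V_def)

lemma inj_on_sub_pos:
  assumes "e \<in> E"
  shows "inj_on (sub_pos k e) {..k}"
proof
  fix i j assume ij: "i \<in> {..k}" "j \<in> {..k}" and eq: "sub_pos k e i = sub_pos k e j"
  show "i = j"
  proof (cases "0 < i \<and> i < k")
    case True
    then show ?thesis using eq sub_pos_eq_Inr[of e j e i] by (simp add: sub_pos_inner)
  next
    case False
    then obtain u where u: "sub_pos k e i = Inl u" using ij by auto
    then show ?thesis
      using sub_pos_eq_Inl[OF u] sub_pos_eq_Inl[of e j u] eq edge_endpoints(2)[OF simple assms] by auto
  qed
qed

lemma subdiv_V_cases:
  "x \<in> Vk \<Longrightarrow> (\<exists>v\<in>V. x = Inl v) \<or> (\<exists>e\<in>E. \<exists>i. 0 < i \<and> i < k \<and> x = Inr (e, i))"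
  by (auto simp: subdiv_V_def)

lemma doubleton_in_subdiv_E_iff:
  "{x, y} \<in> Ek \<longleftrightarrow> (\<exists>e\<in>E. \<exists>i<k.
      (x = sub_pos k e i \<and> y = sub_pos k e (Suc i)) \<or> (y = sub_pos k e i \<and> x = sub_pos k e (Suc i)))"
  unfolding subdiv_E_def by (auto simp: doubleton_eq_iff)

lemma sub_pos_Suc_adjacent: "e \<in> E \<Longrightarrow> i < k \<Longrightarrow> {sub_pos k e i, sub_pos k e (Suc i)} \<in> Ek"
  unfolding doubleton_in_subdiv_E_iff by blast

lemma subdiv_E_Inr_neighbour:
  assumes "{Inr (e, t), y} \<in> Ek"
  shows "e \<in> E \<and> 0 < t \<and> t < k \<and> (y = sub_pos k e (t - 1) \<or> y = sub_pos k e (Suc t))"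
proof -
  obtain e' i where "e' \<in> E" "i < k"
    "(Inr (e, t) = sub_pos k e' i \<and> y = sub_pos k e' (Suc i)) \<or>
     (y = sub_pos k e' i \<and> Inr (e, t) = sub_pos k e' (Suc i))"
    using assms unfolding doubleton_in_subdiv_E_iff by blast
  then show ?thesis using sub_pos_eq_Inr[of e' i e t] sub_pos_eq_Inr[of e' "Suc i" e t] by auto
qed

lemma subdiv_E_not_Inl_Inl: "{Inl u, Inl v} \<notin> Ek"
proof
  assume "{Inl u, Inl v} \<in> Ek"
  then obtain e i where i: "i < k" and
    "(Inl u = sub_pos k e i \<and> Inl v = sub_pos k e (Suc i)) \<or>
     (Inl v = sub_pos k e i \<and> Inl u = sub_pos k e (Suc i))"
    unfolding doubleton_in_subdiv_E_iff by blast
  then obtain a b where a: "sub_pos k e i = Inl a" and b: "sub_pos k e (Suc i) = Inl b" by metis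
  have "i = 0" using sub_pos_eq_Inl[OF a] i by auto
  moreover have "Suc i = k" using sub_pos_eq_Inl[OF b] by auto
  ultimately show False using k_ge_2 by simp
qed

lemma sub_pos_adjacent_iff:
  assumes e: "e \<in> E" and "i \<le> k" "j \<le> k"
  shows "{sub_pos k e i, sub_pos k e j} \<in> Ek \<longleftrightarrow> {i, j} \<in> path_E (k + 1)"
proof
  assume "{i, j} \<in> path_E (k + 1)"
  then show "{sub_pos k e i, sub_pos k e j} \<in> Ek"
    using sub_pos_Suc_adjacent[OF e, of i] sub_pos_Suc_adjacent[OF e, of j]
    by (auto simp: doubleton_in_path_E_iff insert_commute)
next
  have inj: "a = b" if "sub_pos k e a = sub_pos k e b" "a \<le> k" "b \<le> k" for a b
    using inj_on_sub_pos[OF e] that by (auto dest: inj_onD)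
  have nbr: "{a, b} \<in> path_E (k + 1)"
    if "{sub_pos k e a, sub_pos k e b} \<in> Ek" "0 < a" "a < k" "b \<le> k" for a b
  proof -
    have "{Inr (e, a), sub_pos k e b} \<in> Ek" using that by (simp add: sub_pos_inner)
    then have "sub_pos k e b = sub_pos k e (a - 1) \<or> sub_pos k e b = sub_pos k e (Suc a)"
      using subdiv_E_Inr_neighbour by blast
    then have "b = a - 1 \<or> b = Suc a" using inj that by force
    then show ?thesis using that by (auto simp: doubleton_in_path_E_iff)
  qed
  assume adj: "{sub_pos k e i, sub_pos k e j} \<in> Ek"
  consider "0 < i \<and> i < k" | "0 < j \<and> j < k" | "(i = 0 \<or> i = k) \<and> (j = 0 \<or> j = k)"
    using assms by linarith
  then show "{i, j} \<in> path_E (k + 1)"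
  proof cases
    case 1
    then show ?thesis using nbr adj assms by blast
  next
    case 2
    then show ?thesis using nbr[of j i] adj assms by (simp add: insert_commute)
  next
    case 3
    then obtain u v where "sub_pos k e i = Inl u" "sub_pos k e j = Inl v" by auto
    then show ?thesis using adj subdiv_E_not_Inl_Inl by metis
  qed
qed

lemma finite_subdiv_V: "finite Vk"
proof -
  have "{Inr (e, i) | e i. e \<in> E \<and> 1 \<le> i \<and> i < k} \<subseteq> Inr ` (E \<times> {..<k})"
    by auto
  moreover have "finite (Inr ` (E \<times> {..<k}))" using simple_graph_finite_edges[OF simple] by simp
  ultimately have "finite {Inr (e, i) | e i. e \<in> E \<and> 1 \<le> i \<and> i < k}" by (rule finite_subset)
  moreover have "finite V" using simple unfolding simple_graph_def by blast
  ultimately show ?thesis unfolding subdiv_V_def by simp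
qed

section \<open>Restriction to a subdivided edge\<close>

lemma sub_pos_shared_is_endpoint:
  assumes e: "e \<in> E" and "e \<noteq> e'" "sub_pos k e i = sub_pos k e' j"
  shows "\<exists>w\<in>e. sub_pos k e i = Inl w"
proof (cases "sub_pos k e i")
  case (Inl w)
  then show ?thesis using sub_pos_eq_Inl[OF Inl] edge_endpoints(1)[OF simple e] by auto
next
  case (Inr z)
  then obtain e'' t where "sub_pos k e i = Inr (e'', t)" by (cases z) auto
  then show ?thesis using sub_pos_eq_Inr assms(2,3) by metis
qed

text \<open>A vertex adjacent to two vertices of the path subdividing e lies on that path:
  otherwise both neighbours would be endpoints of e, making its own edge equal to e.\<close>

lemma common_neighbour_on_edge_path:
  assumes e: "e \<in> E" and ij: "i \<le> k" "j \<le> k" "i \<noteq> j"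
    and adj: "{x, sub_pos k e i} \<in> Ek" "{x, sub_pos k e j} \<in> Ek"
  shows "\<exists>d\<le>k. x = sub_pos k e d"
proof (cases x)
  case (Inl u)
  have "0 < i \<and> i < k"
  proof (rule ccontr)
    assume "\<not> (0 < i \<and> i < k)"
    then obtain w where "sub_pos k e i = Inl w" using ij by (cases "i = 0") auto
    then show False using adj(1) Inl subdiv_E_not_Inl_Inl by metis
  qed
  moreover have "{Inr (e, i), x} \<in> Ek" using adj(1) calculation by (simp add: sub_pos_inner insert_commute)
  ultimately show ?thesis using subdiv_E_Inr_neighbour by (metis Suc_leI diff_le_self le_trans less_imp_le)
next
  case (Inr z)
  then obtain e' t where x: "x = Inr (e', t)" by (cases z) auto
  have t: "e' \<in> E" "0 < t" "t < k"
    and nbrs: "sub_pos k e i \<in> {sub_pos k e' (t - 1), sub_pos k e' (Suc t)}"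
      "sub_pos k e j \<in> {sub_pos k e' (t - 1), sub_pos k e' (Suc t)}"
    using subdiv_E_Inr_neighbour[of e' t] adj unfolding x by auto
  show ?thesis
  proof (cases "e' = e")
    case True
    then show ?thesis using x t by (intro exI[of _ t]) (simp add: sub_pos_inner)
  next
    case False
    have "sub_pos k e' (t - 1) \<noteq> sub_pos k e' (Suc t)"
      using inj_on_sub_pos[OF t(1)] t by (auto dest: inj_onD)
    moreover have "sub_pos k e i \<noteq> sub_pos k e j"
      using inj_on_sub_pos[OF e] ij by (auto dest: inj_onD)
    ultimately have "sub_pos k e' l \<in> {sub_pos k e i, sub_pos k e j}" if "l = t - 1 \<or> l = Suc t" for l
      using that nbrs by auto
    moreover have "e \<noteq> e'" using False by blast
    ultimately have "\<exists>w\<in>e. sub_pos k e' l = Inl w" if "l = t - 1 \<or> l = Suc t" for l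
      using that sub_pos_shared_is_endpoint[OF e] by (metis insert_iff singletonD)
    then obtain w1 w2 where "w1 \<in> e" "sub_pos k e' (t - 1) = Inl w1" "w2 \<in> e" "sub_pos k e' (Suc t) = Inl w2"
      by blast
    then have "end0 e' \<in> e" "end1 e' \<in> e"
      using t sub_pos_eq_Inl[of e' "t - 1"] sub_pos_eq_Inl[of e' "Suc t"] by auto
    then have "e' \<subseteq> e" using edge_endpoints(1)[OF simple t(1)] by (metis empty_subsetI insert_subset)
    then have "e' = e" using edge_subset_edge_eq[OF simple e t(1)] by blast
    then show ?thesis using False by blast
  qed
qed

lemma edge_path_class_dominator:
  assumes c: "dominated_coloring Vk Ek c" and e: "e \<in> E"
    and i: "i \<le> k" "i' \<le> k" "i \<noteq> i'" "c (sub_pos k e i') = c (sub_pos k e i)"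
  shows "\<exists>d\<le>k. \<forall>l\<le>k. c (sub_pos k e l) = c (sub_pos k e i) \<longrightarrow> {d, l} \<in> path_E (k + 1)"
proof -
  have on_path: "sub_pos k e l \<in> Vk" if "l \<le> k" for l using sub_pos_in_subdiv_V[OF e that] .
  obtain x where x: "\<And>y. y \<in> Vk \<Longrightarrow> c y = c (sub_pos k e i) \<Longrightarrow> {x, y} \<in> Ek"
    using c on_path[OF i(1)] unfolding dominated_coloring_def by blast
  then obtain d where d: "d \<le> k" "x = sub_pos k e d"
    using common_neighbour_on_edge_path[OF e i(1,2,3)] on_path i by metis
  then show ?thesis using x on_path sub_pos_adjacent_iff[OF e d(1)] by blast
qed

lemma dominated_coloring_edge_path:
  assumes c: "dominated_coloring Vk Ek c" and e: "e \<in> E"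
  shows "dominated_coloring (path_V (k + 1)) (path_E (k + 1)) (c \<circ> sub_pos k e)"
  unfolding dominated_coloring_def
proof (intro conjI ballI impI)
  fix i j assume ij: "i \<in> path_V (k + 1)" "j \<in> path_V (k + 1)" "{i, j} \<in> path_E (k + 1)"
  then have "i \<le> k" "j \<le> k" by (auto simp: path_V_def)
  moreover from this ij(3) have "{sub_pos k e i, sub_pos k e j} \<in> Ek" using sub_pos_adjacent_iff[OF e] by blast
  ultimately show "(c \<circ> sub_pos k e) i \<noteq> (c \<circ> sub_pos k e) j"
    using c sub_pos_in_subdiv_V[OF e] unfolding dominated_coloring_def comp_def by blast
next
  fix col assume "col \<in> (c \<circ> sub_pos k e) ` path_V (k + 1)"
  then obtain i where "i \<in> path_V (k + 1)" "col = c (sub_pos k e i)" by auto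
  then have i: "i \<le> k" "col = c (sub_pos k e i)" by (auto simp: path_V_def)
  obtain d where d: "d \<le> k" "\<And>l. l \<le> k \<Longrightarrow> c (sub_pos k e l) = col \<Longrightarrow> {d, l} \<in> path_E (k + 1)"
  proof (cases "\<exists>i'\<le>k. i \<noteq> i' \<and> c (sub_pos k e i') = col")
    case True
    then obtain i' where "i' \<le> k" "i \<noteq> i'" "c (sub_pos k e i') = c (sub_pos k e i)" using i(2) by blast
    from edge_path_class_dominator[OF c e i(1) this] show ?thesis using that i(2) by blast
  next
    case False
    obtain d where d: "d < k + 1" "{d, i} \<in> path_E (k + 1)"
      using path_neighbour_exists[of "k + 1" i] k_ge_2 i(1) by auto
    show ?thesis
    proof (rule that)
      show "d \<le> k" using d(1) by simp
      fix l assume "l \<le> k" "c (sub_pos k e l) = col"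
      then have "l = i" using False by blast
      then show "{d, l} \<in> path_E (k + 1)" using d(2) by simp
    qed
  qed
  show "\<exists>d\<in>path_V (k + 1). \<forall>l\<in>{v \<in> path_V (k + 1). (c \<circ> sub_pos k e) v = col}. {d, l} \<in> path_E (k + 1)"
  proof (intro bexI[of _ d] ballI)
    fix l assume "l \<in> {v \<in> path_V (k + 1). (c \<circ> sub_pos k e) v = col}"
    then show "{d, l} \<in> path_E (k + 1)" using d(2) by (auto simp: path_V_def)
  qed (use d(1) in \<open>simp add: path_V_def\<close>)
qed

lemma chi_dom_path_le_chi_dom_subdiv:
  assumes "dominated_coloring Vk Ek c" "e \<in> E"
  shows "chi_dom (path_V (k + 1)) (path_E (k + 1)) \<le> chi_dom Vk Ek"
proof -
  obtain c' where c': "dominated_coloring Vk Ek c'" "card (c' ` Vk) = chi_dom Vk Ek"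
    using chi_dom_attained[OF assms(1)] by blast
  have "chi_dom (path_V (k + 1)) (path_E (k + 1)) \<le> card ((c' \<circ> sub_pos k e) ` path_V (k + 1))"
    using dominated_coloring_edge_path[OF c'(1) assms(2)] by (rule chi_dom_le)
  also have "\<dots> \<le> card (c' ` Vk)"
    using sub_pos_in_subdiv_V[OF assms(2)]
    by (intro card_mono finite_imageI finite_subdiv_V) (auto simp: path_V_def)
  finally show ?thesis using c'(2) by simp
qed

section \<open>Gluing path colourings along a spanning tree\<close>

lemma dominated_class_on_edge_window:
  assumes e: "e \<in> E" and C: "dominated_coloring (path_V n) (path_E n) C"
    and n: "s + n \<le> k + 1" and j: "j \<in> C ` path_V n"
  shows "\<exists>x\<in>Vk. \<forall>i. s \<le> i \<longrightarrow> i - s < n \<longrightarrow> C (i - s) = j \<longrightarrow> {x, sub_pos k e i} \<in> Ek"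
proof -
  obtain d where "d \<in> path_V n" "\<forall>l\<in>{v \<in> path_V n. C v = j}. {d, l} \<in> path_E n"
    using C j unfolding dominated_coloring_def by blast
  then have d: "d < n" "\<And>l. l < n \<Longrightarrow> C l = j \<Longrightarrow> {d, l} \<in> path_E n"
    by (auto simp: path_V_def)
  have "{sub_pos k e (d + s), sub_pos k e i} \<in> Ek" if i: "s \<le> i" "i - s < n" "C (i - s) = j" for i
  proof -
    have "{d, i - s} \<in> path_E n" using d i by blast
    then have "{d + s, i} \<in> path_E (k + 1)" using i n by (auto simp: doubleton_in_path_E_iff)
    then show ?thesis using sub_pos_adjacent_iff[OF e] d i n by simp
  qed
  moreover have "sub_pos k e (d + s) \<in> Vk" using sub_pos_in_subdiv_V[OF e] d n by simp
  ultimately show ?thesis by blast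
qed

end

locale rooted_subdivision = graph_subdivision +
  fixes e0 :: "'a set" and p :: "'a \<Rightarrow> 'a set"
  assumes root_edge: "e0 \<in> E" and parents: "parent_edges V E e0 p"
begin

text \<open>Each vertex of the subdivision is owned by one edge of G: a branch vertex by its
  parent edge, an inner vertex by the edge it subdivides; its position is its index on the
  path of the owner.\<close>

definition owner :: "'a + 'a set \<times> nat \<Rightarrow> 'a set" where
  "owner x = (case x of Inl v \<Rightarrow> p v | Inr (e, i) \<Rightarrow> e)"

definition position :: "'a + 'a set \<times> nat \<Rightarrow> nat" where
  "position x = (case x of Inl v \<Rightarrow> if v = end0 (p v) then 0 else k | Inr (e, i) \<Rightarrow> i)"

definition offset :: "'a set \<Rightarrow> nat" where
  "offset e = (if p (end0 e) = e then 0 else 1)"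

definition window :: "'a set \<Rightarrow> nat" where
  "window e = (if e = e0 then k + 1 else k)"

definition edge_coloring :: "(nat \<Rightarrow> nat) \<Rightarrow> (nat \<Rightarrow> nat) \<Rightarrow> 'a set \<Rightarrow> nat \<Rightarrow> nat" where
  "edge_coloring cA cB e = (if e = e0 then cB else cA)"

definition local_color :: "(nat \<Rightarrow> nat) \<Rightarrow> (nat \<Rightarrow> nat) \<Rightarrow> 'a + 'a set \<times> nat \<Rightarrow> nat" where
  "local_color cA cB x = edge_coloring cA cB (owner x) (position x - offset (owner x))"

definition glued_coloring :: "(nat \<Rightarrow> nat) \<Rightarrow> (nat \<Rightarrow> nat) \<Rightarrow> 'a + 'a set \<times> nat \<Rightarrow> nat" where
  "glued_coloring cA cB x = prod_encode (to_nat_on E (owner x), local_color cA cB x)"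

lemma parent_edge: "v \<in> V \<Longrightarrow> v \<in> p v \<and> p v \<in> E \<and> (v \<in> e0 \<longrightarrow> p v = e0)"
  using parents unfolding parent_edges_def by auto

lemma parent_edges_inj: "inj_on p (V - e0)"
  using parents unfolding parent_edges_def by blast

lemma parent_edge_root: "v \<in> e0 \<Longrightarrow> p v = e0"
  using parent_edge edge_subset_vertices[OF simple root_edge] by blast

lemma owner_position:
  assumes "x \<in> Vk"
  shows "owner x \<in> E \<and> position x \<le> k \<and> sub_pos k (owner x) (position x) = x"
  using subdiv_V_cases[OF assms]
proof
  assume "\<exists>v\<in>V. x = Inl v"
  then obtain v where v: "v \<in> V" "x = Inl v" by blast
  then have "p v \<in> E" "v = end0 (p v) \<or> v = end1 (p v)"
    using parent_edge edge_endpoints(1)[OF simple] by blast+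
  then show ?thesis using v by (auto simp: owner_def position_def)
next
  assume "\<exists>e\<in>E. \<exists>i. 0 < i \<and> i < k \<and> x = Inr (e, i)"
  then show ?thesis by (auto simp: owner_def position_def sub_pos_inner)
qed

lemma owner_sub_pos_inner:
  "0 < i \<Longrightarrow> i < k \<Longrightarrow> owner (sub_pos k e i) = e \<and> position (sub_pos k e i) = i"
  by (simp add: owner_def position_def sub_pos_inner)

lemma owner_sub_pos_root: "i \<le> k \<Longrightarrow> owner (sub_pos k e0 i) = e0"
  using owner_sub_pos_inner[of i e0] parent_edge_root edge_endpoints_mem[OF simple root_edge]
  by (cases "i = 0 \<or> i = k") (auto simp: owner_def)

lemma position_sub_pos:
  assumes "e \<in> E" "i \<le> k" "owner (sub_pos k e i) = e"
  shows "position (sub_pos k e i) = i"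
proof (cases "0 < i \<and> i < k")
  case True
  then show ?thesis using owner_sub_pos_inner by blast
next
  case False
  then have "i = 0 \<or> i = k" using assms(2) by auto
  then show ?thesis
    using assms(3) edge_endpoints(2)[OF simple assms(1)] by (auto simp: owner_def position_def)
qed

lemma offset_root: "offset e0 = 0"
  using parent_edge_root edge_endpoints_mem[OF simple root_edge] by (simp add: offset_def)

lemma offset_window_le: "offset e + window e \<le> k + 1"
proof (cases "e = e0")
  case True
  then show ?thesis by (simp add: offset_root window_def)
next
  case False
  then show ?thesis by (simp add: offset_def window_def)
qed

text \<open>The one place where injectivity of the parent edges matters: an edge other than e0
  never owns both of its endpoints, so the positions it owns fit into a window of length k.\<close>

lemma position_in_window:
  assumes x: "x \<in> Vk"
  shows "offset (owner x) \<le> position x \<and> position x - offset (owner x) < window (owner x)"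
proof (cases "owner x = e0")
  case True
  then show ?thesis using owner_position[OF x] offset_root by (simp add: window_def)
next
  case not_root: False
  from subdiv_V_cases[OF x] show ?thesis
  proof
    assume "\<exists>v\<in>V. x = Inl v"
    then obtain v where v: "v \<in> V" "x = Inl v" by blast
    define e where "e = p v"
    have e: "e \<in> E" "v \<in> e" "e \<noteq> e0" "v \<notin> e0" "owner x = e"
      using parent_edge[OF v(1)] not_root unfolding e_def v(2) owner_def by auto
    have window: "window e = k" using e(3) by (simp add: window_def)
    show ?thesis
    proof (cases "v = end0 e")
      case True
      then have "position x = 0" "offset e = 0"
        using v(2) by (simp_all add: position_def offset_def e_def)
      then show ?thesis using e(5) window k_ge_2 by simp
    next
      case False
      have "p (end0 e) \<noteq> e"
      proof
        assume end0: "p (end0 e) = e"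
        have "end0 e \<in> V" using edge_endpoints(3)[OF simple e(1)] .
        moreover have "end0 e \<notin> e0" using parent_edge[OF calculation] end0 e(3) by auto
        ultimately have "end0 e = v"
          using inj_onD[OF parent_edges_inj] end0 v(1) e(4) unfolding e_def by blast
        then show False using False by simp
      qed
      then have "position x = k" "offset e = 1"
        using v(2) False by (simp_all add: position_def offset_def e_def)
      then show ?thesis using e(5) window k_ge_2 by simp
    qed
  next
    assume "\<exists>e\<in>E. \<exists>i. 0 < i \<and> i < k \<and> x = Inr (e, i)"
    then obtain e i where "0 < i" "i < k" "x = Inr (e, i)" by blast
    moreover have "offset e \<le> 1" by (simp add: offset_def)
    ultimately show ?thesis using not_root by (simp add: owner_def position_def window_def)
  qed
qed

lemma glued_coloring_eqD:
  assumes "x \<in> Vk" "y \<in> Vk" "glued_coloring cA cB x = glued_coloring cA cB y"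
  shows "owner x = owner y \<and> local_color cA cB x = local_color cA cB y"
proof -
  have "countable E" using simple_graph_finite_edges[OF simple] by (rule countable_finite)
  then show ?thesis
    using assms owner_position inj_on_to_nat_on[of E]
    by (auto simp: glued_coloring_def inj_on_def)
qed

lemma edge_coloring_dominated:
  assumes "dominated_coloring (path_V k) (path_E k) cA"
    and "dominated_coloring (path_V (k + 1)) (path_E (k + 1)) cB"
  shows "dominated_coloring (path_V (window e)) (path_E (window e)) (edge_coloring cA cB e)"
  using assms by (simp add: window_def edge_coloring_def)

lemma glued_coloring_proper:
  assumes cA: "dominated_coloring (path_V k) (path_E k) cA"
    and cB: "dominated_coloring (path_V (k + 1)) (path_E (k + 1)) cB"
    and e: "e \<in> E" and i: "i < k"
  shows "glued_coloring cA cB (sub_pos k e i) \<noteq> glued_coloring cA cB (sub_pos k e (Suc i))"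
proof
  let ?x = "sub_pos k e i" and ?y = "sub_pos k e (Suc i)"
  assume "glued_coloring cA cB ?x = glued_coloring cA cB ?y"
  then have same: "owner ?x = owner ?y" "local_color cA cB ?x = local_color cA cB ?y"
    using glued_coloring_eqD sub_pos_in_subdiv_V[OF e] i by (meson Suc_leI less_imp_le)+
  have owner: "owner ?x = e" "owner ?y = e"
    using same(1) owner_sub_pos_inner[of i e] owner_sub_pos_inner[of "Suc i" e] i k_ge_2
    by (cases "i = 0"; simp)+
  then have pos: "position ?x = i" "position ?y = Suc i"
    using position_sub_pos[OF e] i by simp_all
  let ?s = "offset e" and ?C = "edge_coloring cA cB e"
  have "?s \<le> i" "Suc i - ?s < window e"
    using position_in_window sub_pos_in_subdiv_V[OF e] owner pos i by (metis Suc_leI less_imp_le)+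
  then have "{i - ?s, Suc i - ?s} \<in> path_E (window e)" "i - ?s \<in> path_V (window e)"
    "Suc i - ?s \<in> path_V (window e)"
    by (auto simp: doubleton_in_path_E_iff path_V_def Suc_diff_le)
  moreover have "?C (i - ?s) = ?C (Suc i - ?s)" using same(2) owner pos by (simp add: local_color_def)
  ultimately show False
    using edge_coloring_dominated[OF cA cB, of e] unfolding dominated_coloring_def by blast
qed

lemma glued_coloring_dominated:
  assumes cA: "dominated_coloring (path_V k) (path_E k) cA"
    and cB: "dominated_coloring (path_V (k + 1)) (path_E (k + 1)) cB"
  shows "dominated_coloring Vk Ek (glued_coloring cA cB)"
  unfolding dominated_coloring_def
proof (intro conjI ballI impI)
  fix x y assume "x \<in> Vk" "y \<in> Vk" "{x, y} \<in> Ek"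
  then obtain e i where "e \<in> E" "i < k"
    "(x = sub_pos k e i \<and> y = sub_pos k e (Suc i)) \<or> (y = sub_pos k e i \<and> x = sub_pos k e (Suc i))"
    unfolding doubleton_in_subdiv_E_iff by blast
  then show "glued_coloring cA cB x \<noteq> glued_coloring cA cB y"
    using glued_coloring_proper[OF cA cB] by metis
next
  fix j assume "j \<in> glued_coloring cA cB ` Vk"
  then obtain x0 where x0: "x0 \<in> Vk" "j = glued_coloring cA cB x0" by blast
  define e where "e = owner x0"
  let ?s = "offset e" and ?C = "edge_coloring cA cB e"
  have "?C (position x0 - ?s) \<in> ?C ` path_V (window e)"
    using position_in_window[OF x0(1)] by (auto simp: e_def path_V_def)
  from dominated_class_on_edge_window[OF _ edge_coloring_dominated[OF cA cB] offset_window_le this]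
  obtain x where x: "x \<in> Vk"
    "\<And>i. ?s \<le> i \<Longrightarrow> i - ?s < window e \<Longrightarrow> ?C (i - ?s) = ?C (position x0 - ?s) \<Longrightarrow> {x, sub_pos k e i} \<in> Ek"
    using owner_position[OF x0(1)] unfolding e_def by blast
  show "\<exists>x\<in>Vk. \<forall>y\<in>{v \<in> Vk. glued_coloring cA cB v = j}. {x, y} \<in> Ek"
  proof (intro bexI ballI)
    fix y assume "y \<in> {v \<in> Vk. glued_coloring cA cB v = j}"
    then have y: "y \<in> Vk" "owner y = e" "local_color cA cB y = local_color cA cB x0"
      using glued_coloring_eqD[of y x0] x0 unfolding e_def by auto
    then show "{x, y} \<in> Ek"
      using x(2)[of "position y"] position_in_window[OF y(1)] owner_position[OF y(1)]
      by (simp add: local_color_def e_def)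
  qed (rule x(1))
qed

lemma card_glued_coloring:
  "card (glued_coloring cA cB ` Vk) \<le> (card E - 1) * card (cA ` path_V k) + card (cB ` path_V (k + 1))"
proof -
  let ?col = "\<lambda>e. edge_coloring cA cB e ` path_V (window e)"
  have finE: "finite E" using simple_graph_finite_edges[OF simple] .
  have "glued_coloring cA cB ` Vk \<subseteq> prod_encode ` (\<Union>e\<in>E. Pair (to_nat_on E e) ` ?col e)"
    using owner_position position_in_window
    by (fastforce simp: glued_coloring_def local_color_def path_V_def)
  then have "card (glued_coloring cA cB ` Vk) \<le> card (prod_encode ` (\<Union>e\<in>E. Pair (to_nat_on E e) ` ?col e))"
    using finE by (intro card_mono) (auto simp: path_V_def)
  also have "\<dots> \<le> card (\<Union>e\<in>E. Pair (to_nat_on E e) ` ?col e)"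
    by (rule card_image_le) (use finE in \<open>auto simp: path_V_def\<close>)
  also have "\<dots> \<le> (\<Sum>e\<in>E. card (Pair (to_nat_on E e) ` ?col e))"
    using finE by (rule card_UN_le)
  also have "\<dots> \<le> (\<Sum>e\<in>E. card (?col e))"
    by (intro sum_mono card_image_le) (auto simp: path_V_def)
  also have "\<dots> = card (?col e0) + (\<Sum>e\<in>E - {e0}. card (?col e))"
    using finE root_edge by (rule sum.remove)
  also have "\<dots> = card (cB ` path_V (k + 1)) + (card E - 1) * card (cA ` path_V k)"
    using finE root_edge by (simp add: edge_coloring_def window_def)
  finally show ?thesis by simp
qed

end

theorem theorem4p2:
  fixes V :: "'a set" and E :: "'a set set" and k m :: nat
  assumes "simple_graph V E" and "connected_graph V E"
    and "E \<noteq> {}"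
    and "m = card E"
    and "k \<ge> 2"
  shows "chi_dom (path_V (k+1)) (path_E (k+1)) \<le> chi_dom (subdiv_V k V E) (subdiv_E k E)
       \<and> chi_dom (subdiv_V k V E) (subdiv_E k E)
           \<le> (m - 1) * chi_dom (path_V k) (path_E k) + chi_dom (path_V (k+1)) (path_E (k+1))"
proof -
  interpret graph_subdivision V E k using assms(1,5) by unfold_locales
  obtain e0 where e0: "e0 \<in> E" using assms(3) by blast
  obtain p where "parent_edges V E e0 p" using parent_edges_exist[OF assms(1,2) e0] by blast
  then interpret rooted_subdivision V E k e0 p using e0 by unfold_locales
  obtain cA where cA: "dominated_coloring (path_V k) (path_E k) cA"
    "card (cA ` path_V k) = chi_dom (path_V k) (path_E k)"
    using chi_dom_attained[OF dominated_coloring_path_id] assms(5) by blast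
  obtain cB where cB: "dominated_coloring (path_V (k + 1)) (path_E (k + 1)) cB"
    "card (cB ` path_V (k + 1)) = chi_dom (path_V (k + 1)) (path_E (k + 1))"
    using chi_dom_attained[OF dominated_coloring_path_id[of "k + 1"]] assms(5) by auto
  have c: "dominated_coloring Vk Ek (glued_coloring cA cB)"
    using glued_coloring_dominated[OF cA(1) cB(1)] .
  have "chi_dom Vk Ek \<le> (m - 1) * chi_dom (path_V k) (path_E k) + chi_dom (path_V (k + 1)) (path_E (k + 1))"
    using chi_dom_le[OF c] card_glued_coloring[of cA cB] cA(2) cB(2) assms(4) by simp
  moreover have "chi_dom (path_V (k + 1)) (path_E (k + 1)) \<le> chi_dom Vk Ek"
    using chi_dom_path_le_chi_dom_subdiv[OF c e0] .
  ultimately show ?thesis by simp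
qed

end
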